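(* Let $D_+, D_-$ be a pair of SBP operators of order $q\ge1$ on $[a,b]$ with associated data $H,S,\mathbf{p}_0,\mathbf{p}_n,\mathbf{x}$, which is nullspace consistent but does not have the eigenvalue property. Let $\|\cdot\|$ be any norm on $\mathbb{R}^{(n+1)\times(n+1)}$ and $\varepsilon>0$. Then there exists a real symmetric positive semidefinite matrix $S'\in\mathbb{R}^{(n+1)\times(n+1)}$ with $S'\mathbf{x}^j=\mathbf{0}$ for $j=0,\dots,q$, such that, setting $D_+' = D_+ + \tfrac12 H^{-1}S'$ and $D_-' = D_- - \tfrac12 H^{-1}S'$: (i) $D_+', D_-'$ form a pair of SBP operators of order $q$ on $[a,b]$ with the data $H$, $S+S'$, $\mathbf{p}_0$, $\mathbf{p}_n$, $\mathbf{x}$; (ii) $D_+'$ is nullspace consistent and has the eigenvalue property, i.e. every eigenvalue of $\tilde D_+' := D_+' + H^{-1}\mathbf{p}_0\mathbf{p}_0^\top$ has strictly positive real part; (iii) every eigenpair $(\lambda,\mathbf{v})$ of $\tilde D_+ = D_+ + H^{-1}\mathbf{p}_0\mathbf{p}_0^\top$ with $\operatorname{Re}(\lambda)\ne0$ is also an eigenpair of $\tilde D_+'$; (iv) $\|D_+' - D_+\|\le\varepsilon$.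
   Context: Let $[a,b]$ be an interval with $b>a$ and $n\ge 1$. For $\mathbf{x}\in\mathbb{R}^{n+1}$, $\mathbf{x}^j$ denotes elementwise exponentiation, with $\mathbf{x}^0=\mathbf{1}=(1,\dots,1)^\top$. Matrices $D_+, D_-\in\mathbb{R}^{(n+1)\times(n+1)}$ form a pair of SBP (summation-by-parts) operators of order $q\ge 1$ on $[a,b]$ if there exist matrices $H,S\in\mathbb{R}^{(n+1)\times(n+1)}$ and vectors $\mathbf{p}_0,\mathbf{p}_n,\mathbf{x}\in\mathbb{R}^{n+1}$ such that: (A) $D_\pm \mathbf{x}^j = j\mathbf{x}^{j-1}$, $\mathbf{p}_0^\top\mathbf{x}^j = a^j$, $\mathbf{p}_n^\top \mathbf{x}^j = b^j$ for $j=0,\dots,q$ (with $0\cdot\mathbf{x}^{-1}:=\mathbf{0}$); (B) $H=H^\top$ is positive definite; (C) $HD_+ + D_+^\top H = -\mathbf{p}_0\mathbf{p}_0^\top + \mathbf{p}_n\mathbf{p}_n^\top + S$ with $S=S^\top$ positive semidefinite; (D) $HD_+ + D_-^\top H = -\mathbf{p}_0\mathbf{p}_0^\top + \mathbf{p}_n\mathbf{p}_n^\top$; (E) $\mathbf{x}=(x_0,\dots,x_n)^\top$ with $x_i\ne x_j$ for $i\ne j$. The SBP operator is called nullspace consistent if $\ker D_+=\operatorname{span}\{\mathbf{1}\}$. Set $\tilde D_+ := D_+ + H^{-1}\mathbf{p}_0\mathbf{p}_0^\top$ (with the $H,\mathbf{p}_0$ of the given data). The SBP operator has the eigenvalue property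 if every eigenvalue of $\tilde D_+$ has strictly positive real part. *)

theory Defs
  imports "HOL-Analysis.Analysis"
begin

text \<open>Vectors in R^(n+1) are modelled as real^'n with CARD('n) = n+1;
  matrices as real^'n^'n.\<close>

definition xpow :: "real^'n \<Rightarrow> nat \<Rightarrow> real^'n" where
  "xpow x j = (\<chi> i. (x $ i) ^ j)"

definition ones :: "real^'n" where
  "ones = (\<chi> i. 1)"

definition outer :: "real^'n \<Rightarrow> real^'n \<Rightarrow> real^'n^'n" where
  "outer u v = (\<chi> i k. u $ i * v $ k)"

definition symmetric_mat :: "real^'n^'n \<Rightarrow> bool" where
  "symmetric_mat A \<longleftrightarrow> transpose A = A"

definition pos_def :: "real^'n^'n \<Rightarrow> bool" where
  "pos_def A \<longleftrightarrow> symmetric_mat A \<and> (\<forall>v. v \<noteq> 0 \<longrightarrow> v \<bullet> (A *v v) > 0)"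

definition pos_semidef :: "real^'n^'n \<Rightarrow> bool" where
  "pos_semidef A \<longleftrightarrow> symmetric_mat A \<and> (\<forall>v. v \<bullet> (A *v v) \<ge> 0)"

definition sbp_pair ::
  "real \<Rightarrow> real \<Rightarrow> nat \<Rightarrow> real^'n^'n \<Rightarrow> real^'n^'n \<Rightarrow> real^'n^'n \<Rightarrow> real^'n^'n
   \<Rightarrow> real^'n \<Rightarrow> real^'n \<Rightarrow> real^'n \<Rightarrow> bool" where
  "sbp_pair a b q Dp Dm H S p0 pn x \<longleftrightarrow>
     (\<forall>j\<le>q. Dp *v xpow x j = (if j = 0 then 0 else real j *\<^sub>R xpow x (j - 1))
           \<and> Dm *v xpow x j = (if j = 0 then 0 else real j *\<^sub>R xpow x (j - 1))
           \<and> p0 \<bullet> xpow x j = a ^ j \<and> pn \<bullet> xpow x j = b ^ j)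
   \<and> pos_def H
   \<and> H ** Dp + transpose Dp ** H = - outer p0 p0 + outer pn pn + S
   \<and> pos_semidef S
   \<and> H ** Dp + transpose Dm ** H = - outer p0 p0 + outer pn pn
   \<and> (\<forall>i k. i \<noteq> k \<longrightarrow> x $ i \<noteq> x $ k)"

definition nullspace_consistent :: "real^'n^'n \<Rightarrow> bool" where
  "nullspace_consistent D \<longleftrightarrow> {v. D *v v = 0} = span {ones}"

definition cmat :: "real^'n^'n \<Rightarrow> complex^'n^'n" where
  "cmat A = (\<chi> i k. complex_of_real (A $ i $ k))"

definition eigenpair :: "real^'n^'n \<Rightarrow> complex \<Rightarrow> complex^'n \<Rightarrow> bool" where
  "eigenpair A lam v \<longleftrightarrow> v \<noteq> 0 \<and> cmat A *v v = lam *s v"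

definition Dtilde :: "real^'n^'n \<Rightarrow> real^'n^'n \<Rightarrow> real^'n \<Rightarrow> real^'n^'n" where
  "Dtilde Dp H p0 = Dp + matrix_inv H ** outer p0 p0"

definition eigenvalue_property :: "real^'n^'n \<Rightarrow> real^'n^'n \<Rightarrow> real^'n \<Rightarrow> bool" where
  "eigenvalue_property Dp H p0 \<longleftrightarrow>
     (\<forall>lam v. eigenpair (Dtilde Dp H p0) lam v \<longrightarrow> Re lam > 0)"

definition is_norm :: "(real^'n^'n \<Rightarrow> real) \<Rightarrow> bool" where
  "is_norm N \<longleftrightarrow> (\<forall>A. N A = 0 \<longleftrightarrow> A = 0) \<and> (\<forall>A B. N (A + B) \<le> N A + N B)
     \<and> (\<forall>c A. N (c *\<^sub>R A) = \<bar>c\<bar> * N A)"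

end

theory Submission
  imports Defs
begin

(*
  Write Dt = D_+ + H^-1 p0 p0^T. The SBP identities give the Lyapunov identity
  H Dt + Dt^T H = B with B = p0 p0^T + pn pn^T + S positive semidefinite, so every eigenvalue of Dt
  has nonnegative real part, and for a purely imaginary one the real and imaginary parts of the
  eigenvector lie in ker B.

  Let V be the span of the monomials x^j (j \<le> q) and of the real and imaginary parts of all
  eigenvectors of Dt whose eigenvalue is off the imaginary axis, and take S' = \<delta> S0 with S0 \<ge> 0 and
  ker S0 = V. Adding H^-1 S'/2 keeps the SBP identities (S' kills the monomials) and fixes every
  eigenpair lying in V. A purely imaginary eigenpair of the perturbed operator would have its
  eigenvector in ker (B + S') = ker B \<inter> V, hence be an eigenpair of Dt itself. Then H applied to
  its real and imaginary parts gives left eigenvectors of Dt for a nonzero imaginary eigenvalue; by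
  the exactness of D_+ on monomials they are orthogonal to all x^j, and as left eigenvectors they
  are orthogonal to all eigenvectors for other eigenvalues, hence to V, which forces the eigenvector
  to vanish. Nullspace consistency and the norm bound hold once \<delta> is small, since injectivity of
  v \<mapsto> (D_+ v, 1^T v) is an open condition.
*)

lemma outer_mult_vec: "outer u v *v w = (v \<bullet> w) *\<^sub>R u"
  by (simp add: vec_eq_iff outer_def matrix_vector_mult_def inner_vec_def sum_distrib_left mult_ac)

lemma transpose_outer: "transpose (outer u v) = outer v u"
  by (simp add: vec_eq_iff outer_def transpose_def)

lemma transpose_add: "transpose (A + B) = transpose A + transpose (B::real^'n^'m)"
  by (simp add: transpose_def vec_eq_iff)

lemma matrix_add_rdistrib: "(A + B) ** C = A ** C + B ** (C::real^'n^'m)"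
  by (simp add: matrix_matrix_mult_def vec_eq_iff sum.distrib distrib_right)

lemma scaleR_matrix_mult_vec:
  fixes A :: "real^'n^'m" and B :: "real^'k^'n"
  shows "(c *\<^sub>R (A ** B)) *v u = c *\<^sub>R (A *v (B *v u))"
  by (simp add: matrix_vector_mul_assoc flip: scaleR_matrix_vector_assoc)

lemma matrix_vector_mult_uminus: "A *v (- x) = - (A *v (x::real^'n))"
  using matrix_vector_mult_scaleR[of A "-1" x] by simp

lemma inner_transpose_mult_vec: "(transpose A *v y) \<bullet> x = y \<bullet> ((A::real^'n^'m) *v x)"
  by (simp add: dot_lmul_matrix)

lemma symmetric_inner_mult_vec:
  "transpose A = A \<Longrightarrow> x \<bullet> ((A::real^'n^'n) *v y) = y \<bullet> (A *v x)"
  by (metis inner_transpose_mult_vec inner_commute)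

lemma pos_semidef_quadratic_zero_imp_kernel:
  assumes "pos_semidef A" "v \<bullet> (A *v v) = 0"
  shows "A *v v = 0"
proof -
  have sym: "transpose A = A" and ge: "\<And>u. u \<bullet> (A *v u) \<ge> 0"
    using assms(1) by (simp_all add: pos_semidef_def symmetric_mat_def)
  define w where "w = A *v v"
  define d where "d = w \<bullet> (A *v w)"
  \<comment> \<open>along the line \<open>v + t w\<close> the form is \<open>2 t |w|\<^sup>2 + t\<^sup>2 d\<close>, negative for small \<open>t < 0\<close> unless \<open>w = 0\<close>\<close>
  have line: "0 \<le> 2 * t * (w \<bullet> w) + t^2 * d" for t
  proof -
    have "(v + t *\<^sub>R w) \<bullet> (A *v (v + t *\<^sub>R w))
        = v \<bullet> (A *v v) + t * (v \<bullet> (A *v w)) + t * (w \<bullet> (A *v v)) + t^2 * d"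
      by (simp add: matrix_vector_right_distrib matrix_vector_mult_scaleR inner_add_left
          inner_add_right d_def power2_eq_square algebra_simps)
    moreover have "v \<bullet> (A *v w) = w \<bullet> w" "w \<bullet> (A *v v) = w \<bullet> w"
      using symmetric_inner_mult_vec[OF sym, of v w] by (simp_all add: w_def)
    ultimately show ?thesis
      using ge[of "v + t *\<^sub>R w"] assms(2) by (simp add: algebra_simps)
  qed
  have "d \<ge> 0" using ge d_def by simp
  have "w \<bullet> w = 0"
  proof (rule ccontr)
    assume "w \<bullet> w \<noteq> 0"
    then have "w \<bullet> w > 0" by simp
    define s where "s = w \<bullet> w"
    define t where "t = - s / (d + 1)"
    have "2 * t * s + t^2 * d = - (s^2 * (d + 2) / (d + 1)^2)"
      using \<open>d \<ge> 0\<close> by (simp add: t_def divide_simps power2_eq_square) (simp add: algebra_simps)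
    also have "\<dots> < 0" using \<open>d \<ge> 0\<close> \<open>w \<bullet> w > 0\<close> by (simp add: s_def divide_neg_pos)
    finally show False using line[of t] unfolding s_def by linarith
  qed
  then show ?thesis by (simp add: w_def)
qed

lemma pos_semidef_add: "pos_semidef A \<Longrightarrow> pos_semidef B \<Longrightarrow> pos_semidef (A + B)"
  by (simp add: pos_semidef_def symmetric_mat_def transpose_add matrix_vector_mult_add_rdistrib
      inner_add_right add_nonneg_nonneg)

lemma pos_semidef_add_kernel:
  assumes "pos_semidef A" "pos_semidef B" "(A + B) *v v = 0"
  shows "A *v v = 0" and "B *v v = 0"
proof -
  have "v \<bullet> ((A + B) *v v) = 0"
    using assms(3) by simp
  then have "v \<bullet> (A *v v) + v \<bullet> (B *v v) = 0"
    by (simp add: matrix_vector_mult_add_rdistrib inner_add_right)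
  moreover have "v \<bullet> (A *v v) \<ge> 0" "v \<bullet> (B *v v) \<ge> 0"
    using assms(1,2) by (simp_all add: pos_semidef_def)
  ultimately have "v \<bullet> (A *v v) = 0" "v \<bullet> (B *v v) = 0"
    by linarith+
  then show "A *v v = 0" "B *v v = 0"
    using pos_semidef_quadratic_zero_imp_kernel assms(1,2) by blast+
qed

lemma pos_semidef_scaleR: "0 \<le> c \<Longrightarrow> pos_semidef A \<Longrightarrow> pos_semidef (c *\<^sub>R A)"
  by (simp add: pos_semidef_def symmetric_mat_def transpose_scalar flip: scaleR_matrix_vector_assoc)

lemma pos_semidef_outer: "pos_semidef (outer u u)"
  by (simp add: pos_semidef_def symmetric_mat_def transpose_outer outer_mult_vec)
    (metis inner_commute zero_le_square)

lemma kernel_scaleR: "c \<noteq> 0 \<Longrightarrow> {u. (c *\<^sub>R A) *v u = 0} = {u. (A::real^'n^'m) *v u = 0}"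
  by (simp flip: scaleR_matrix_vector_assoc)

lemma pos_def_matrix_inv:
  assumes "pos_def H"
  shows "H ** matrix_inv H = mat 1"
proof -
  have "H *v v = 0 \<Longrightarrow> v = 0" for v
    using assms by (force simp: pos_def_def)
  then have "invertible H"
    using invertible_left_inverse matrix_left_invertible_ker by blast
  then have "\<exists>A. H ** A = mat 1 \<and> A ** H = mat 1"
    by (simp add: invertible_def)
  then have "H ** matrix_inv H = mat 1 \<and> matrix_inv H ** H = mat 1"
    unfolding matrix_inv_def by (rule someI_ex)
  then show ?thesis ..
qed

lemma pos_semidef_kernel_span:
  fixes G :: "(real^'n) set"
  obtains A :: "real^'n^'n" where "pos_semidef A" and "{u. A *v u = 0} = span G"
proof -
  define U where "U = {y. \<forall>g\<in>G. orthogonal g y}"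
  obtain W where W: "W \<subseteq> U" and "independent W" and complement: "U \<subseteq> span W"
    using basis_exists[of U] by metis
  then have "finite W" by (simp add: finiteI_independent)
  define A where "A = (\<Sum>w\<in>W. outer w w)"
  have A_mult: "A *v u = (\<Sum>w\<in>W. (w \<bullet> u) *\<^sub>R w)" for u
    unfolding A_def using \<open>finite W\<close>
    by (induction W rule: finite_induct) (simp_all add: matrix_vector_mult_add_rdistrib outer_mult_vec)
  have A_form: "u \<bullet> (A *v u) = (\<Sum>w\<in>W. (w \<bullet> u)^2)" for u
    by (simp add: A_mult inner_sum_right power2_eq_square inner_commute)
  have "transpose A = A"
    by (simp add: A_def transpose_def outer_def vec_eq_iff mult.commute)
  then have "pos_semidef A"
    by (simp add: pos_semidef_def symmetric_mat_def A_form sum_nonneg)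
  moreover have "u \<in> span G" if "A *v u = 0" for u
  proof -
    have "(\<Sum>w\<in>W. (w \<bullet> u)^2) = 0"
      using that A_form[of u] by simp
    then have "\<forall>w\<in>W. orthogonal u w"
      by (simp add: sum_nonneg_eq_0_iff[OF \<open>finite W\<close>] orthogonal_def inner_commute)
    obtain y z where "y \<in> span G" and z: "\<And>w. w \<in> span G \<Longrightarrow> orthogonal z w" and u: "u = y + z"
      using orthogonal_subspace_decomp_exists[of G u] by blast
    have "orthogonal g z" if "g \<in> G" for g
      using z[OF span_base[OF that]] by (simp add: orthogonal_def inner_commute)
    then have "z \<in> span W"
      using complement by (auto simp: U_def)
    then have "orthogonal u z"
      using orthogonal_to_span[of z W u] \<open>\<forall>w\<in>W. orthogonal u w\<close> by blast
    moreover have "orthogonal y z"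
      using z[OF \<open>y \<in> span G\<close>] by (simp add: orthogonal_def inner_commute)
    ultimately have "z = 0"
      using u by (simp add: orthogonal_def inner_add_left)
    then show ?thesis using u \<open>y \<in> span G\<close> by simp
  qed
  moreover have "A *v u = 0" if "u \<in> span G" for u
  proof -
    have "orthogonal w u" if "w \<in> W" for w
    proof -
      have "orthogonal w g" if "g \<in> G" for g
        using W \<open>w \<in> W\<close> \<open>g \<in> G\<close> by (auto simp: U_def orthogonal_def inner_commute)
      then show ?thesis using orthogonal_to_span[OF \<open>u \<in> span G\<close>] by blast
    qed
    then show ?thesis by (simp add: A_mult orthogonal_def)
  qed
  ultimately show thesis
    using that[of A] by blast
qed

definition re_vec :: "complex^'n \<Rightarrow> real^'n" where
  "re_vec v = (\<chi> i. Re (v $ i))"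

definition im_vec :: "complex^'n \<Rightarrow> real^'n" where
  "im_vec v = (\<chi> i. Im (v $ i))"

lemma complex_vec_eq_0_iff: "(v::complex^'n) = 0 \<longleftrightarrow> re_vec v = 0 \<and> im_vec v = 0"
  by (auto simp: vec_eq_iff re_vec_def im_vec_def complex_eq_iff)

lemma cmat_mult_vec_eq_iff:
  "cmat A *v v = lam *s v \<longleftrightarrow>
    A *v re_vec v = Re lam *\<^sub>R re_vec v - Im lam *\<^sub>R im_vec v \<and>
    A *v im_vec v = Im lam *\<^sub>R re_vec v + Re lam *\<^sub>R im_vec v"
  by (simp add: vec_eq_iff complex_eq_iff cmat_def re_vec_def im_vec_def matrix_vector_mult_def
      Re_sum Im_sum mult_ac add_ac all_conj_distrib)

lemma eigenpair_iff:
  "eigenpair A lam v \<longleftrightarrow> (re_vec v \<noteq> 0 \<or> im_vec v \<noteq> 0) \<and>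
    A *v re_vec v = Re lam *\<^sub>R re_vec v - Im lam *\<^sub>R im_vec v \<and>
    A *v im_vec v = Im lam *\<^sub>R re_vec v + Re lam *\<^sub>R im_vec v"
  by (auto simp: eigenpair_def cmat_mult_vec_eq_iff complex_vec_eq_0_iff)

lemma eigenpair_add_vanishing:
  assumes "E *v re_vec v = 0" "E *v im_vec v = 0"
  shows "eigenpair (A + E) lam v \<longleftrightarrow> eigenpair A lam v"
  using assms by (simp add: eigenpair_iff matrix_vector_mult_add_rdistrib)

lemma lyapunov_eigenpair:
  assumes H: "pos_def H" and lyap: "H ** A + transpose A ** H = B" and B: "pos_semidef B"
    and ep: "eigenpair A lam v"
  shows "0 \<le> Re lam" and "Re lam = 0 \<Longrightarrow> B *v re_vec v = 0 \<and> B *v im_vec v = 0"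
proof -
  define vr vi where "vr = re_vec v" and "vi = im_vec v"
  have Hsym: "transpose H = H" and Hpos: "\<And>u. u \<noteq> 0 \<Longrightarrow> 0 < u \<bullet> (H *v u)"
    using H by (simp_all add: pos_def_def symmetric_mat_def)
  have Bge: "\<And>u. 0 \<le> u \<bullet> (B *v u)"
    using B by (simp add: pos_semidef_def)
  have form: "u \<bullet> (B *v u) = 2 * (u \<bullet> (H *v (A *v u)))" for u
  proof -
    have "u \<bullet> (B *v u) = u \<bullet> (H *v (A *v u)) + (transpose A *v (H *v u)) \<bullet> u"
      by (simp add: lyap[symmetric] matrix_vector_mult_add_rdistrib matrix_vector_mul_assoc
          inner_add_right inner_commute del: transpose_matrix_vector)
    also have "(transpose A *v (H *v u)) \<bullet> u = (H *v u) \<bullet> (A *v u)"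
      by (rule inner_transpose_mult_vec)
    also have "\<dots> = (A *v u) \<bullet> (H *v u)"
      by (rule inner_commute)
    also have "\<dots> = u \<bullet> (H *v (A *v u))"
      by (rule symmetric_inner_mult_vec[OF Hsym])
    finally show ?thesis by simp
  qed
  have e: "A *v vr = Re lam *\<^sub>R vr - Im lam *\<^sub>R vi" "A *v vi = Im lam *\<^sub>R vr + Re lam *\<^sub>R vi"
    and nz: "vr \<noteq> 0 \<or> vi \<noteq> 0"
    using ep by (simp_all add: eigenpair_iff vr_def vi_def)
  \<comment> \<open>the rotation part cancels because H is symmetric\<close>
  have "vr \<bullet> (H *v (A *v vr)) + vi \<bullet> (H *v (A *v vi)) = Re lam * (vr \<bullet> (H *v vr) + vi \<bullet> (H *v vi))"
    using symmetric_inner_mult_vec[OF Hsym, of vr vi]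
    by (simp add: e matrix_vector_mult_diff_distrib matrix_vector_right_distrib
        matrix_vector_mult_scaleR inner_diff_right inner_add_right algebra_simps)
  then have energy: "vr \<bullet> (B *v vr) + vi \<bullet> (B *v vi) = 2 * Re lam * (vr \<bullet> (H *v vr) + vi \<bullet> (H *v vi))"
    using form[of vr] form[of vi] by simp
  have "vr \<bullet> (H *v vr) + vi \<bullet> (H *v vi) > 0"
    using nz Hpos[of vr] Hpos[of vi] by (cases "vr = 0"; cases "vi = 0") auto
  moreover have "0 \<le> 2 * Re lam * (vr \<bullet> (H *v vr) + vi \<bullet> (H *v vi))"
    using energy Bge[of vr] Bge[of vi] by linarith
  ultimately show "0 \<le> Re lam"
    by (simp add: zero_le_mult_iff)
  assume "Re lam = 0"
  with energy have "vr \<bullet> (B *v vr) + vi \<bullet> (B *v vi) = 0"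
    by simp
  with Bge[of vr] Bge[of vi] have "vr \<bullet> (B *v vr) = 0" "vi \<bullet> (B *v vi) = 0"
    by linarith+
  then show "B *v re_vec v = 0 \<and> B *v im_vec v = 0"
    using pos_semidef_quadratic_zero_imp_kernel[OF B] by (simp add: vr_def vi_def)
qed

(* The hypotheses say that yr \<plusminus> i yi are left eigenvectors of A for the eigenvalues \<mp>i\<beta>. *)
lemma left_imaginary_eigvec_orthogonal:
  assumes left: "transpose A *v yr = \<beta> *\<^sub>R yi" "transpose A *v yi = - \<beta> *\<^sub>R yr"
    and ep: "eigenpair A lam v" and Re: "Re lam \<noteq> 0"
  shows "yr \<bullet> re_vec v = 0 \<and> yr \<bullet> im_vec v = 0 \<and> yi \<bullet> re_vec v = 0 \<and> yi \<bullet> im_vec v = 0"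
proof -
  define a1 a2 a3 a4 where "a1 = yr \<bullet> re_vec v" and "a2 = yr \<bullet> im_vec v"
    and "a3 = yi \<bullet> re_vec v" and "a4 = yi \<bullet> im_vec v"
  have ev: "A *v re_vec v = Re lam *\<^sub>R re_vec v - Im lam *\<^sub>R im_vec v"
    "A *v im_vec v = Im lam *\<^sub>R re_vec v + Re lam *\<^sub>R im_vec v"
    using ep by (simp_all add: eigenpair_iff)
  have pair: "y \<bullet> (A *v w) = (transpose A *v y) \<bullet> w" for y w
    by (simp add: dot_lmul_matrix)
  have "\<beta> * a3 = Re lam * a1 - Im lam * a2" "\<beta> * a4 = Im lam * a1 + Re lam * a2"
    "- \<beta> * a1 = Re lam * a3 - Im lam * a4" "- \<beta> * a2 = Im lam * a3 + Re lam * a4"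
    using pair[of yr "re_vec v"] pair[of yr "im_vec v"] pair[of yi "re_vec v"] pair[of yi "im_vec v"]
    by (simp_all add: a1_def a2_def a3_def a4_def ev left inner_diff_right inner_add_right del: transpose_matrix_vector)
  then have r: "Re lam * a1 = \<beta> * a3 + Im lam * a2" "Re lam * a2 = \<beta> * a4 - Im lam * a1"
    "Re lam * a3 = Im lam * a4 - \<beta> * a1" "Re lam * a4 = - \<beta> * a2 - Im lam * a3"
    by linarith+
  have "Re lam * (a1^2 + a2^2 + a3^2 + a4^2)
      = a1 * (Re lam * a1) + a2 * (Re lam * a2) + a3 * (Re lam * a3) + a4 * (Re lam * a4)"
    by (simp add: power2_eq_square algebra_simps)
  also have "\<dots> = 0"
    unfolding r by (simp add: algebra_simps)
  finally have "Re lam * (a1^2 + a2^2 + a3^2 + a4^2) = 0" .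
  then have "a1^2 + a2^2 + a3^2 + a4^2 = 0"
    using Re by simp
  then show ?thesis
    by (simp add: a1_def a2_def a3_def a4_def add_nonneg_eq_0_iff)
qed

lemma is_norm_nonneg:
  assumes "is_norm N"
  shows "0 \<le> N A"
proof -
  have "N (A + (-1) *\<^sub>R A) \<le> N A + N ((-1) *\<^sub>R A)" and "N ((-1) *\<^sub>R A) = \<bar>-1\<bar> * N A"
    and "N 0 = 0"
    using assms unfolding is_norm_def by blast+
  then show ?thesis by simp
qed

lemma nullspace_consistent_perturb:
  fixes D E :: "real^'n^'n"
  assumes nsc: "nullspace_consistent D" and E: "E *v ones = 0"
  obtains \<delta> where "\<delta> > 0" and "\<And>t. \<bar>t\<bar> \<le> \<delta> \<Longrightarrow> nullspace_consistent (D + t *\<^sub>R E)"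
proof -
  have ker: "D *v v = 0 \<longleftrightarrow> v \<in> span {ones}" for v
    using nsc unfolding nullspace_consistent_def by blast
  define f where "f v = (D *v v, ones \<bullet> v)" for v :: "real^'n"
  have "linear f"
    unfolding f_def by (rule linearI) (simp_all add: matrix_vector_right_distrib
        matrix_vector_mult_scaleR inner_add_right)
  moreover have "inj f"
  proof (rule linear_injective_0[THEN iffD2, OF \<open>linear f\<close>], intro allI impI)
    fix v assume "f v = 0"
    then have "v \<in> span {ones}" and "ones \<bullet> v = 0"
      using ker by (auto simp: f_def zero_prod_def)
    then show "v = 0"
      by (auto simp: span_singleton)
  qed
  ultimately obtain c where "c > 0" and c: "\<And>v. c * norm v \<le> norm (f v)"
    using linear_inj_bounded_below_pos by blast
  obtain M where "M > 0" and M: "\<And>v. norm (E *v v) \<le> M * norm v"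
    using linear_bounded_pos[OF matrix_vector_mul_linear] by blast
  show thesis
  proof (rule that)
    show "c / (2 * M) > 0"
      using \<open>c > 0\<close> \<open>M > 0\<close> by simp
  next
    fix t :: real assume t: "\<bar>t\<bar> \<le> c / (2 * M)"
    have "(D + t *\<^sub>R E) *v ones = 0"
      using ker E by (simp add: matrix_vector_mult_add_rdistrib span_base flip: scaleR_matrix_vector_assoc)
    moreover have "v \<in> span {ones}" if "(D + t *\<^sub>R E) *v v = 0" for v
    proof -
      have "(ones::real^'n) \<bullet> ones = real CARD('n)"
        by (simp add: ones_def inner_vec_def)
      define w where "w = v - ((ones \<bullet> v) / real CARD('n)) *\<^sub>R ones"
      have "ones \<bullet> w = 0"
        using \<open>ones \<bullet> ones = real CARD('n)\<close> by (simp add: w_def inner_diff_right)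
      have "(D + t *\<^sub>R E) *v w = 0"
        using that \<open>(D + t *\<^sub>R E) *v ones = 0\<close>
        by (simp add: w_def matrix_vector_mult_diff_distrib matrix_vector_mult_scaleR)
      then have "D *v w = - (t *\<^sub>R (E *v w))"
        by (simp add: matrix_vector_mult_add_rdistrib eq_neg_iff_add_eq_0 flip: scaleR_matrix_vector_assoc)
      \<comment> \<open>the perturbation is too small to compensate the lower bound of \<open>f\<close> on \<open>ones\<^sup>\<bottom>\<close>\<close>
      then have "c * norm w \<le> \<bar>t\<bar> * norm (E *v w)"
        using c[of w] \<open>ones \<bullet> w = 0\<close> by (simp add: f_def norm_Pair)
      also have "\<dots> \<le> \<bar>t\<bar> * (M * norm w)"
        by (intro mult_left_mono M) simp
      also have "\<dots> = (\<bar>t\<bar> * M) * norm w"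
        by simp
      also have "\<dots> \<le> c / 2 * norm w"
        using t \<open>M > 0\<close> by (intro mult_right_mono) (simp_all add: field_simps)
      finally have "w = 0"
        using \<open>c > 0\<close> by (simp add: mult_le_cancel_right2)
      then show ?thesis
        by (simp add: w_def span_singleton eq_diff_eq)
    qed
    moreover have "(D + t *\<^sub>R E) *v v = 0" if "v \<in> span {ones}" for v
      using that \<open>(D + t *\<^sub>R E) *v ones = 0\<close> by (auto simp: span_singleton matrix_vector_mult_scaleR)
    ultimately show "nullspace_consistent (D + t *\<^sub>R E)"
      unfolding nullspace_consistent_def by blast
  qed
qed

definition re_nonzero_eigvec_parts :: "real^'n^'n \<Rightarrow> (real^'n) set" where
  "re_nonzero_eigvec_parts A =
     {re_vec v |v. \<exists>lam. Re lam \<noteq> 0 \<and> eigenpair A lam v} \<union>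
     {im_vec v |v. \<exists>lam. Re lam \<noteq> 0 \<and> eigenpair A lam v}"

lemma eigenpair_add_vanishing_on_parts:
  assumes "eigenpair A lam v" "Re lam \<noteq> 0"
    and "\<And>u. u \<in> re_nonzero_eigvec_parts A \<Longrightarrow> E *v u = 0"
  shows "eigenpair (A + E) lam v"
proof -
  have "re_vec v \<in> re_nonzero_eigvec_parts A" "im_vec v \<in> re_nonzero_eigvec_parts A"
    using assms(1,2) unfolding re_nonzero_eigvec_parts_def by blast+
  then show ?thesis
    using assms eigenpair_add_vanishing by blast
qed

lemma lyapunov_form_add_perturbation:
  fixes H X A A' :: "real^'n^'n"
  assumes "pos_def H" "transpose X = X"
  shows "H ** (A + c *\<^sub>R (matrix_inv H ** X)) + transpose (A' + d *\<^sub>R (matrix_inv H ** X)) ** H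
     = H ** A + transpose A' ** H + (c + d) *\<^sub>R X"
proof -
  have "transpose H = H"
    using assms(1) by (simp add: pos_def_def symmetric_mat_def)
  have right: "H ** (c *\<^sub>R (matrix_inv H ** X)) = c *\<^sub>R X"
    by (simp add: matrix_scalar_ac matrix_mul_assoc pos_def_matrix_inv[OF assms(1)]
        flip: scalar_matrix_assoc)
  have "transpose (matrix_inv H) ** H = transpose (H ** matrix_inv H)"
    by (simp add: matrix_transpose_mul \<open>transpose H = H\<close>)
  then have "transpose (matrix_inv H) ** H = mat 1"
    by (simp add: pos_def_matrix_inv[OF assms(1)])
  then have left: "transpose (d *\<^sub>R (matrix_inv H ** X)) ** H = d *\<^sub>R X"
    by (simp add: transpose_scalar matrix_transpose_mul assms(2)
        flip: scalar_matrix_assoc matrix_mul_assoc)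
  show ?thesis
    by (simp add: matrix_add_ldistrib transpose_add matrix_add_rdistrib right left scaleR_add_left)
qed

lemma Dtilde_add: "Dtilde (D + E) H p0 = Dtilde D H p0 + E"
  by (simp add: Dtilde_def algebra_simps)

lemma Dtilde_mult_vec: "Dtilde D H p0 *v u = D *v u + (p0 \<bullet> u) *\<^sub>R (matrix_inv H *v p0)"
  by (simp add: Dtilde_def matrix_vector_mult_add_rdistrib outer_mult_vec matrix_vector_mult_scaleR
      flip: matrix_vector_mul_assoc)

lemma sbp_pair_Dtilde_lyapunov:
  assumes "sbp_pair a b q Dp Dm H S p0 pn x"
  shows "H ** Dtilde Dp H p0 + transpose (Dtilde Dp H p0) ** H = outer p0 p0 + outer pn pn + S"
proof -
  have H: "pos_def H" and C: "H ** Dp + transpose Dp ** H = - outer p0 p0 + outer pn pn + S"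
    using assms by (simp_all add: sbp_pair_def)
  have D: "Dtilde Dp H p0 = Dp + 1 *\<^sub>R (matrix_inv H ** outer p0 p0)"
    by (simp add: Dtilde_def)
  have "H ** Dtilde Dp H p0 + transpose (Dtilde Dp H p0) ** H
      = H ** Dp + transpose Dp ** H + (1 + 1) *\<^sub>R outer p0 p0"
    unfolding D by (rule lyapunov_form_add_perturbation[OF H transpose_outer])
  also have "\<dots> = outer p0 p0 + outer pn pn + S"
    unfolding C by (simp add: scaleR_2)
  finally show ?thesis .
qed

lemma sbp_pair_perturb:
  assumes sbp: "sbp_pair a b q Dp Dm H S p0 pn x" and S': "pos_semidef S'"
    and exact: "\<forall>j\<le>q. S' *v xpow x j = 0"
  shows "sbp_pair a b q (Dp + (1/2) *\<^sub>R (matrix_inv H ** S')) (Dm - (1/2) *\<^sub>R (matrix_inv H ** S'))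
           H (S + S') p0 pn x"
proof -
  define E where "E = matrix_inv H ** S'"
  have deriv: "\<forall>j\<le>q. Dp *v xpow x j = (if j = 0 then 0 else real j *\<^sub>R xpow x (j - 1))
           \<and> Dm *v xpow x j = (if j = 0 then 0 else real j *\<^sub>R xpow x (j - 1))
           \<and> p0 \<bullet> xpow x j = a ^ j \<and> pn \<bullet> xpow x j = b ^ j"
    and H: "pos_def H"
    and C: "H ** Dp + transpose Dp ** H = - outer p0 p0 + outer pn pn + S"
    and S: "pos_semidef S"
    and Dc: "H ** Dp + transpose Dm ** H = - outer p0 p0 + outer pn pn"
    and distinct: "\<forall>i k. i \<noteq> k \<longrightarrow> x $ i \<noteq> x $ k"
    using sbp unfolding sbp_pair_def by simp_all
  have sym: "transpose S' = S'"
    using S' by (simp add: pos_semidef_def symmetric_mat_def)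
  have E_xpow: "(c *\<^sub>R E) *v xpow x j = 0" if "j \<le> q" for c j
    using exact that by (simp add: E_def scaleR_matrix_mult_vec)
  have "H ** (Dp + (1/2) *\<^sub>R E) + transpose (Dp + (1/2) *\<^sub>R E) ** H
      = H ** Dp + transpose Dp ** H + (1/2 + 1/2) *\<^sub>R S'"
    unfolding E_def by (rule lyapunov_form_add_perturbation[OF H sym])
  then have C': "H ** (Dp + (1/2) *\<^sub>R E) + transpose (Dp + (1/2) *\<^sub>R E) ** H
      = - outer p0 p0 + outer pn pn + (S + S')"
    by (simp add: C add.assoc)
  have "H ** (Dp + (1/2) *\<^sub>R E) + transpose (Dm + (-1/2) *\<^sub>R E) ** H
      = H ** Dp + transpose Dm ** H + (1/2 + -1/2) *\<^sub>R S'"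
    unfolding E_def by (rule lyapunov_form_add_perturbation[OF H sym])
  then have Dc': "H ** (Dp + (1/2) *\<^sub>R E) + transpose (Dm - (1/2) *\<^sub>R E) ** H
      = - outer p0 p0 + outer pn pn"
    by (simp add: Dc)
  show ?thesis
    unfolding sbp_pair_def E_def[symmetric]
    using deriv E_xpow H C' pos_semidef_add[OF S S'] Dc' distinct
    by (simp add: matrix_vector_mult_add_rdistrib matrix_vector_mult_diff_rdistrib)
qed

lemma sbp_boundary_kernel:
  assumes "pos_semidef S" "(outer p0 p0 + outer pn pn + S) *v u = 0"
  shows "p0 \<bullet> u = 0"
proof -
  have "outer p0 p0 *v u = 0"
    using pos_semidef_add_kernel(1)[OF pos_semidef_outer pos_semidef_add[OF pos_semidef_outer assms(1)]]
      assms(2) by (simp add: add.assoc)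
  then have "u \<bullet> (outer p0 p0 *v u) = 0"
    by simp
  then show ?thesis
    by (simp add: outer_mult_vec inner_commute)
qed

lemma sbp_left_eigvec_orthogonal_xpow:
  assumes sbp: "sbp_pair a b q Dp Dm H S p0 pn x"
    and left: "transpose (Dtilde Dp H p0) *v y = \<beta> *\<^sub>R y'"
      "transpose (Dtilde Dp H p0) *v y' = - \<beta> *\<^sub>R y"
    and "\<beta> \<noteq> 0"
    and boundary: "y \<bullet> (matrix_inv H *v p0) = 0" "y' \<bullet> (matrix_inv H *v p0) = 0"
  shows "j \<le> q \<Longrightarrow> y \<bullet> xpow x j = 0 \<and> y' \<bullet> xpow x j = 0"
proof (induction j)
  define Dt where "Dt = Dtilde Dp H p0"
  have deriv: "Dp *v xpow x j = (if j = 0 then 0 else real j *\<^sub>R xpow x (j - 1))" if "j \<le> q" for j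
    using sbp that by (simp add: sbp_pair_def)
  have pair: "z \<bullet> (Dt *v w) = (transpose Dt *v z) \<bullet> w" for z w
    by (simp add: dot_lmul_matrix)
  \<comment> \<open>\<open>y \<bullet> Dt w = \<beta> (y' \<bullet> w)\<close>, while \<open>Dt x^j\<close> only involves \<open>x^(j-1)\<close> and \<open>H\<^sup>-\<^sup>1 p0\<close>\<close>
  have step: "y \<bullet> xpow x j = 0 \<and> y' \<bullet> xpow x j = 0"
    if "y \<bullet> (Dp *v xpow x j) = 0" "y' \<bullet> (Dp *v xpow x j) = 0" for j
  proof -
    have "y \<bullet> (Dt *v xpow x j) = 0" "y' \<bullet> (Dt *v xpow x j) = 0"
      using that boundary by (simp_all add: Dt_def Dtilde_mult_vec inner_add_right)
    then show ?thesis
      using pair[of y "xpow x j"] pair[of y' "xpow x j"] left \<open>\<beta> \<noteq> 0\<close>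
      by (simp add: Dt_def del: transpose_matrix_vector)
  qed
  {
    case 0
    then show ?case using step deriv by simp
  next
    case (Suc j)
    then show ?case using step deriv[OF Suc.prems] by simp
  }
qed

lemma sbp_imaginary_eigvec_not_in_span:
  assumes sbp: "sbp_pair a b q Dp Dm H S p0 pn x" and nsc: "nullspace_consistent Dp"
    and ep: "eigenpair (Dtilde Dp H p0) lam v" and "Re lam = 0"
    and boundary: "(outer p0 p0 + outer pn pn + S) *v re_vec v = 0"
      "(outer p0 p0 + outer pn pn + S) *v im_vec v = 0"
  shows "re_vec v \<notin> span ({xpow x j |j. j \<le> q} \<union> re_nonzero_eigvec_parts (Dtilde Dp H p0))
       \<or> im_vec v \<notin> span ({xpow x j |j. j \<le> q} \<union> re_nonzero_eigvec_parts (Dtilde Dp H p0))"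
proof -
  define Dt Hi B vr vi \<beta> where "Dt = Dtilde Dp H p0" and "Hi = matrix_inv H"
    and "B = outer p0 p0 + outer pn pn + S" and "vr = re_vec v" and "vi = im_vec v" and "\<beta> = Im lam"
  define G where "G = {xpow x j |j. j \<le> q} \<union> re_nonzero_eigvec_parts Dt"
  have H: "pos_def H" and S: "pos_semidef S" and "p0 \<bullet> xpow x 0 = 1" and "Dp *v xpow x 0 = 0"
    using sbp by (simp_all add: sbp_pair_def)
  then have "p0 \<bullet> ones = 1"
    by (simp add: xpow_def ones_def)
  have Hsym: "transpose H = H" and Hpos: "\<And>u. u \<noteq> 0 \<Longrightarrow> 0 < u \<bullet> (H *v u)"
    using H by (simp_all add: pos_def_def symmetric_mat_def)
  have p0v: "p0 \<bullet> vr = 0" "p0 \<bullet> vi = 0"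
    using sbp_boundary_kernel[OF S] boundary by (simp_all add: vr_def vi_def)
  have e: "Dt *v vr = - \<beta> *\<^sub>R vi" "Dt *v vi = \<beta> *\<^sub>R vr" and nz: "vr \<noteq> 0 \<or> vi \<noteq> 0"
    using ep \<open>Re lam = 0\<close> by (simp_all add: eigenpair_iff Dt_def vr_def vi_def \<beta>_def)
  have "\<beta> \<noteq> 0"
  proof
    assume "\<beta> = 0"
    have "u = 0" if "Dp *v u = 0" "p0 \<bullet> u = 0" for u
    proof -
      have "u \<in> span {ones}"
        using nsc that(1) unfolding nullspace_consistent_def by blast
      then obtain k where "u = k *\<^sub>R ones"
        by (auto simp: span_singleton)
      then show ?thesis using that(2) \<open>p0 \<bullet> ones = 1\<close> by simp
    qed
    then have "vr = 0" "vi = 0"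
      using e p0v \<open>\<beta> = 0\<close> by (simp_all add: Dt_def Dtilde_mult_vec)
    then show False using nz by simp
  qed
  \<comment> \<open>the Lyapunov identity turns \<open>H vr, H vi\<close> into a left eigenvector pair of \<open>Dt\<close> for \<open>i\<beta>\<close>\<close>
  have transpose_Dt: "transpose Dt *v (H *v u) = B *v u - H *v (Dt *v u)" for u
  proof -
    have "B *v u = (H ** Dt + transpose Dt ** H) *v u"
      by (simp add: sbp_pair_Dtilde_lyapunov[OF sbp] Dt_def B_def)
    also have "\<dots> = H *v (Dt *v u) + transpose Dt *v (H *v u)"
      by (simp add: matrix_vector_mult_add_rdistrib matrix_vector_mul_assoc
          del: transpose_matrix_vector)
    finally show ?thesis
      by (simp add: algebra_simps)
  qed
  have left: "transpose Dt *v (H *v vr) = \<beta> *\<^sub>R (H *v vi)"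
    "transpose Dt *v (H *v vi) = - \<beta> *\<^sub>R (H *v vr)"
    using transpose_Dt[of vr] transpose_Dt[of vi] boundary e
    by (simp_all add: B_def vr_def vi_def matrix_vector_mult_scaleR matrix_vector_mult_uminus
        del: transpose_matrix_vector)
  have "(H *v u) \<bullet> (Hi *v p0) = p0 \<bullet> u" for u
    using symmetric_inner_mult_vec[OF Hsym, of "Hi *v p0" u] pos_def_matrix_inv[OF H]
    by (simp add: Hi_def matrix_vector_mul_assoc inner_commute)
  then have "(H *v vr) \<bullet> (Hi *v p0) = 0" "(H *v vi) \<bullet> (Hi *v p0) = 0"
    using p0v by simp_all
  then have xpow: "(H *v vr) \<bullet> xpow x j = 0 \<and> (H *v vi) \<bullet> xpow x j = 0" if "j \<le> q" for j
    using sbp_left_eigvec_orthogonal_xpow[OF sbp left[unfolded Dt_def] \<open>\<beta> \<noteq> 0\<close>] that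
    by (simp add: Hi_def)
  have parts: "(H *v vr) \<bullet> u = 0 \<and> (H *v vi) \<bullet> u = 0" if "u \<in> re_nonzero_eigvec_parts Dt" for u
    using that left_imaginary_eigvec_orthogonal[OF left] unfolding re_nonzero_eigvec_parts_def by fast
  have "orthogonal (H *v vr) g \<and> orthogonal (H *v vi) g" if "g \<in> G" for g
    using that xpow parts unfolding G_def orthogonal_def by blast
  then have "vr \<in> span G \<Longrightarrow> vr \<bullet> (H *v vr) = 0" "vi \<in> span G \<Longrightarrow> vi \<bullet> (H *v vi) = 0"
    using orthogonal_to_span by (metis orthogonal_def inner_commute)+
  then show ?thesis
    using nz Hpos[of vr] Hpos[of vi] unfolding G_def Dt_def vr_def vi_def by fastforce
qed

lemma sbp_eigenvalue_property_perturb: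
  assumes sbp: "sbp_pair a b q Dp Dm H S p0 pn x" and nsc: "nullspace_consistent Dp"
    and S': "pos_semidef S'"
    and ker: "{u. S' *v u = 0} = span ({xpow x j |j. j \<le> q} \<union> re_nonzero_eigvec_parts (Dtilde Dp H p0))"
  shows "eigenvalue_property (Dp + (1/2) *\<^sub>R (matrix_inv H ** S')) H p0"
  unfolding eigenvalue_property_def
proof (intro allI impI)
  fix lam v
  define Dt E B where "Dt = Dtilde Dp H p0" and "E = (1/2) *\<^sub>R (matrix_inv H ** S')"
    and "B = outer p0 p0 + outer pn pn + S"
  assume "eigenpair (Dtilde (Dp + E) H p0) lam v"
  then have ep: "eigenpair (Dt + E) lam v"
    by (simp add: Dtilde_add Dt_def)
  have H: "pos_def H" and S: "pos_semidef S"
    using sbp by (simp_all add: sbp_pair_def)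
  have B: "pos_semidef B"
    unfolding B_def by (intro pos_semidef_add pos_semidef_outer S)
  have "transpose S' = S'"
    using S' by (simp add: pos_semidef_def symmetric_mat_def)
  then have "H ** (Dt + E) + transpose (Dt + E) ** H = H ** Dt + transpose Dt ** H + (1/2 + 1/2) *\<^sub>R S'"
    unfolding E_def by (rule lyapunov_form_add_perturbation[OF H])
  then have lyap: "H ** (Dt + E) + transpose (Dt + E) ** H = B + S'"
    by (simp add: sbp_pair_Dtilde_lyapunov[OF sbp] Dt_def B_def)
  have "Re lam \<noteq> 0"
  proof
    assume "Re lam = 0"
    then have "(B + S') *v re_vec v = 0" "(B + S') *v im_vec v = 0"
      using lyapunov_eigenpair(2)[OF H lyap pos_semidef_add[OF B S'] ep] by auto
    then have "B *v re_vec v = 0" "B *v im_vec v = 0" "S' *v re_vec v = 0" "S' *v im_vec v = 0"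
      using pos_semidef_add_kernel[OF B S'] by blast+
    moreover from this have "E *v re_vec v = 0" "E *v im_vec v = 0"
      by (simp_all add: E_def scaleR_matrix_mult_vec)
    then have "eigenpair Dt lam v"
      using ep eigenpair_add_vanishing by blast
    ultimately show False
      using sbp_imaginary_eigvec_not_in_span[OF sbp nsc _ \<open>Re lam = 0\<close>] ker
      by (auto simp: Dt_def B_def)
  qed
  then show "0 < Re lam"
    using lyapunov_eigenpair(1)[OF H lyap pos_semidef_add[OF B S'] ep] by simp
qed

lemma sbp_kernel_span_perturbation:
  assumes sbp: "sbp_pair a b q Dp Dm H S p0 pn x" and nsc: "nullspace_consistent Dp"
    and S': "pos_semidef S'"
    and ker: "{u. S' *v u = 0} = span ({xpow x j |j. j \<le> q} \<union> re_nonzero_eigvec_parts (Dtilde Dp H p0))"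
  shows "\<forall>j\<le>q. S' *v xpow x j = 0"
    and "sbp_pair a b q (Dp + (1/2) *\<^sub>R (matrix_inv H ** S')) (Dm - (1/2) *\<^sub>R (matrix_inv H ** S'))
           H (S + S') p0 pn x"
    and "eigenvalue_property (Dp + (1/2) *\<^sub>R (matrix_inv H ** S')) H p0"
    and "Re lam \<noteq> 0 \<Longrightarrow> eigenpair (Dtilde Dp H p0) lam v
           \<Longrightarrow> eigenpair (Dtilde (Dp + (1/2) *\<^sub>R (matrix_inv H ** S')) H p0) lam v"
proof -
  show exact: "\<forall>j\<le>q. S' *v xpow x j = 0"
    using ker by (auto intro: span_base)
  show "sbp_pair a b q (Dp + (1/2) *\<^sub>R (matrix_inv H ** S')) (Dm - (1/2) *\<^sub>R (matrix_inv H ** S'))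
      H (S + S') p0 pn x"
    by (rule sbp_pair_perturb[OF sbp S' exact])
  show "eigenvalue_property (Dp + (1/2) *\<^sub>R (matrix_inv H ** S')) H p0"
    by (rule sbp_eigenvalue_property_perturb[OF sbp nsc S' ker])
  assume "Re lam \<noteq> 0" "eigenpair (Dtilde Dp H p0) lam v"
  moreover have "S' *v u = 0" if "u \<in> re_nonzero_eigvec_parts (Dtilde Dp H p0)" for u
    using ker that by (auto intro: span_base)
  ultimately show "eigenpair (Dtilde (Dp + (1/2) *\<^sub>R (matrix_inv H ** S')) H p0) lam v"
    unfolding Dtilde_add
    by (intro eigenpair_add_vanishing_on_parts) (simp_all add: scaleR_matrix_mult_vec)
qed

theorem theorem2:
  fixes a b \<epsilon> :: real and q :: nat
    and Dp Dm H S :: "real^'n^'n" and p0 pn x :: "real^'n"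
    and N :: "real^'n^'n \<Rightarrow> real"
  assumes "CARD('n) \<ge> 2" and "a < b" and "q \<ge> 1"
    and "sbp_pair a b q Dp Dm H S p0 pn x"
    and "nullspace_consistent Dp"
    and "\<not> eigenvalue_property Dp H p0"
    and "is_norm N" and "\<epsilon> > 0"
  shows "\<exists>S'. pos_semidef S' \<and> (\<forall>j\<le>q. S' *v xpow x j = 0) \<and>
    (let Dp' = Dp + (1/2) *\<^sub>R (matrix_inv H ** S');
         Dm' = Dm - (1/2) *\<^sub>R (matrix_inv H ** S')
     in sbp_pair a b q Dp' Dm' H (S + S') p0 pn x
      \<and> nullspace_consistent Dp' \<and> eigenvalue_property Dp' H p0
      \<and> (\<forall>lam v. Re lam \<noteq> 0 \<and> eigenpair (Dtilde Dp H p0) lam v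
               \<longrightarrow> eigenpair (Dtilde Dp' H p0) lam v)
      \<and> N (Dp' - Dp) \<le> \<epsilon>)"
proof -
  define G where "G = {xpow x j |j. j \<le> q} \<union> re_nonzero_eigvec_parts (Dtilde Dp H p0)"
  obtain S0 where S0: "pos_semidef S0" and ker0: "{u. S0 *v u = 0} = span G"
    using pos_semidef_kernel_span by blast
  define E where "E = (1/2) *\<^sub>R (matrix_inv H ** S0)"
  have "ones \<in> G"
    unfolding G_def by (force simp: xpow_def ones_def)
  then have "S0 *v ones = 0"
    using ker0 span_base by blast
  then have "E *v ones = 0"
    by (simp add: E_def scaleR_matrix_mult_vec)
  then obtain \<delta>0 where "\<delta>0 > 0" and nsc: "\<And>t. \<bar>t\<bar> \<le> \<delta>0 \<Longrightarrow> nullspace_consistent (Dp + t *\<^sub>R E)"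
    using nullspace_consistent_perturb assms(5) by blast
  define \<delta> where "\<delta> = min \<delta>0 (\<epsilon> / (N E + 1))"
  have "\<delta> > 0" and "\<delta> * N E \<le> \<epsilon>"
    using \<open>\<delta>0 > 0\<close> \<open>\<epsilon> > 0\<close> is_norm_nonneg[OF assms(7), of E]
    by (auto simp: \<delta>_def min_def field_simps)
  define S' where "S' = \<delta> *\<^sub>R S0"
  have half_S': "(1/2) *\<^sub>R (matrix_inv H ** S') = \<delta> *\<^sub>R E"
    by (simp add: S'_def E_def matrix_scalar_ac flip: scalar_matrix_assoc)
  have S': "pos_semidef S'" and ker: "{u. S' *v u = 0} = span G"
    using S0 ker0 \<open>\<delta> > 0\<close> by (simp_all add: S'_def pos_semidef_scaleR kernel_scaleR)
  note perturbation = sbp_kernel_span_perturbation[OF assms(4,5) S' ker[unfolded G_def]]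
  have "nullspace_consistent (Dp + (1/2) *\<^sub>R (matrix_inv H ** S'))"
    unfolding half_S' using nsc \<open>\<delta> > 0\<close> by (simp add: \<delta>_def)
  moreover have "N (Dp + (1/2) *\<^sub>R (matrix_inv H ** S') - Dp) \<le> \<epsilon>"
    using assms(7) \<open>\<delta> > 0\<close> \<open>\<delta> * N E \<le> \<epsilon>\<close> by (simp add: half_S' is_norm_def)
  ultimately show ?thesis
    unfolding Let_def
    by (intro exI[of _ S'] conjI allI impI S' perturbation(1-3) perturbation(1)[rule_format])
      (auto intro: perturbation(4))
qed

end
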